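(* Let $N\ge1$ and let $\mu_N\subset\mathbb{C}^*$ act on $\mathbb{C}^*$ by multiplication. The strict holomorphic endomorphisms of $[\mathbb{C}^*/\mu_N]$ are exactly the pairs $(\widetilde\psi,\sigma)$ with $\sigma(\zeta)=\zeta^m$ and $\widetilde\psi(z)=z^m g(z^N)$, where $m\in\mathbb{Z}$ and $g:\mathbb{C}^*\to\mathbb{C}^*$ is holomorphic. Modulo $2$-isomorphism, $g$ is determined up to multiplication by a constant root of unity.
   Context: For a subgroup $\Gamma\subset\mathbb{C}^*$ acting on $\mathbb{C}^*$ by multiplication, a strict endomorphism of $[\mathbb{C}^*/\Gamma]$ is a pair $(\widetilde\psi,\sigma)$ with $\widetilde\psi:\mathbb{C}^*\to\mathbb{C}^*$ holomorphic and $\sigma:\Gamma\to\Gamma$ a homomorphism such that $\widetilde\psi(\gamma z)=\sigma(\gamma)\widetilde\psi(z)$ for all $\gamma,z$. Two strict pairs $(\widetilde\psi,\sigma)$, $(\widetilde\psi',\sigma)$ are $2$-isomorphic if $\widetilde\psi'=a\widetilde\psi$ for some constant $a\in\Gamma$. $\mu_N$ is the group of $N$-th roots of unity. *)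

theory Defs
  imports "HOL-Complex_Analysis.Complex_Analysis"
begin

definition mu :: "nat \<Rightarrow> complex set" where
  "mu N = {z. z ^ N = 1}"

text \<open>Functions are total in HOL; only
  their values on C* (resp. Gamma) matter.\<close>
definition strict_endo :: "complex set \<Rightarrow> (complex \<Rightarrow> complex) \<Rightarrow> (complex \<Rightarrow> complex) \<Rightarrow> bool" where
  "strict_endo \<Gamma> \<psi> \<sigma> \<longleftrightarrow>
     \<psi> holomorphic_on (- {0}) \<and> (\<forall>z. z \<noteq> 0 \<longrightarrow> \<psi> z \<noteq> 0) \<and>
     (\<forall>\<gamma>\<in>\<Gamma>. \<sigma> \<gamma> \<in> \<Gamma>) \<and>
     (\<forall>a\<in>\<Gamma>. \<forall>b\<in>\<Gamma>. \<sigma> (a * b) = \<sigma> a * \<sigma> b) \<and>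
     (\<forall>\<gamma>\<in>\<Gamma>. \<forall>z. z \<noteq> 0 \<longrightarrow> \<psi> (\<gamma> * z) = \<sigma> \<gamma> * \<psi> z)"

definition two_iso :: "complex set \<Rightarrow> (complex \<Rightarrow> complex) \<Rightarrow> (complex \<Rightarrow> complex) \<Rightarrow> bool" where
  "two_iso \<Gamma> \<psi> \<psi>' \<longleftrightarrow> (\<exists>a\<in>\<Gamma>. \<forall>z. z \<noteq> 0 \<longrightarrow> \<psi>' z = a * \<psi> z)"

end

theory Submission
  imports Defs
begin

text \<open>A homomorphism \<sigma> of the cyclic group mu N is determined by the image of a generator,
  so \<sigma> \<zeta> = \<zeta>^m. Equivariance then says that \<psi> z / z^m is invariant under mu N, hence a
  function g of z^N; g is holomorphic because near every point it is that invariant function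
  composed with a holomorphic branch of the N-th root. Conversely z^m g(z^N) is equivariant
  since (\<zeta> z)^N = z^N. As z \<mapsto> z^N maps C* onto itself, multiplying \<psi> by a constant
  a in mu N amounts to multiplying g by a.\<close>

lemma mu_nonzero: "N \<ge> 1 \<Longrightarrow> \<zeta> \<in> mu N \<Longrightarrow> \<zeta> \<noteq> 0"
  unfolding mu_def by (auto simp: power_0_left)

lemma mu_mult: "a \<in> mu N \<Longrightarrow> b \<in> mu N \<Longrightarrow> a * b \<in> mu N"
  unfolding mu_def by (simp add: power_mult_distrib)

lemma mu_power_int:
  assumes "\<zeta> \<in> mu N"
  shows "\<zeta> powi m \<in> mu N"
proof -
  have "(\<zeta> powi m) ^ N = (\<zeta> ^ N) powi m"
    by (simp add: power_int_power power_int_power' mult.commute)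
  with assms show ?thesis by (simp add: mu_def)
qed

lemma mu_eq_powers_of_primitive_root:
  assumes "N \<ge> 1" "\<zeta> \<in> mu N"
  shows "\<exists>j::nat. \<zeta> = exp (2 * pi * \<i> / N) ^ j"
proof -
  obtain j :: nat where "\<zeta> = exp (2 * pi * \<i> * j / N)"
    using assms complex_roots_unity[OF assms(1)] unfolding mu_def by auto
  also have "\<dots> = exp (2 * pi * \<i> / N) ^ j"
    by (simp add: exp_of_nat_mult[symmetric] field_simps)
  finally show ?thesis by blast
qed

lemma mu_endomorphism_is_power:
  assumes N: "N \<ge> 1"
    and maps: "\<forall>\<zeta>\<in>mu N. \<sigma> \<zeta> \<in> mu N"
    and hom: "\<forall>a\<in>mu N. \<forall>b\<in>mu N. \<sigma> (a * b) = \<sigma> a * \<sigma> b"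
  obtains m :: nat where "\<forall>\<zeta>\<in>mu N. \<sigma> \<zeta> = \<zeta> ^ m"
proof -
  define \<omega> where "\<omega> = exp (2 * pi * \<i> / N)"
  have \<omega>: "\<omega> ^ j \<in> mu N" for j
    using complex_root_unity[of N 1] N unfolding \<omega>_def mu_def
    by (simp add: power_mult[symmetric] mult.commute[of _ N] power_mult)
  have "\<sigma> 1 = \<sigma> 1 * \<sigma> 1"
    using hom \<omega>[of 0] by (metis power_0 mult_1)
  moreover have "\<sigma> 1 \<noteq> 0"
    using maps \<omega>[of 0] mu_nonzero[OF N] by simp
  ultimately have "\<sigma> 1 = 1" by (metis mult_cancel_left mult_1_right)
  have \<sigma>_power: "\<sigma> (\<omega> ^ j) = \<sigma> \<omega> ^ j" for j
  proof (induction j)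
    case (Suc j)
    have "\<sigma> (\<omega> ^ Suc j) = \<sigma> \<omega> * \<sigma> (\<omega> ^ j)"
      using hom \<omega>[of 1] \<omega>[of j] by simp
    with Suc show ?case by simp
  qed (simp add: \<open>\<sigma> 1 = 1\<close>)
  obtain k where "\<sigma> \<omega> = \<omega> ^ k"
    using mu_eq_powers_of_primitive_root[OF N] maps \<omega>[of 1] unfolding \<omega>_def by auto
  then have "\<sigma> \<zeta> = \<zeta> ^ k" if "\<zeta> \<in> mu N" for \<zeta>
    using mu_eq_powers_of_primitive_root[OF N that] \<sigma>_power unfolding \<omega>_def[symmetric]
    by (auto simp: power_mult[symmetric] mult.commute)
  then show ?thesis using that by blast
qed

definition principal_root :: "nat \<Rightarrow> complex \<Rightarrow> complex" where
  "principal_root N w = exp (Ln w / N)"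

lemma principal_root_power: "N \<ge> 1 \<Longrightarrow> w \<noteq> 0 \<Longrightarrow> principal_root N w ^ N = w"
  unfolding principal_root_def by (simp add: exp_of_nat_mult[symmetric])

lemma principal_root_nonzero: "principal_root N w \<noteq> 0"
  unfolding principal_root_def by simp

lemma local_holomorphic_root:
  assumes N: "N \<ge> 1" and w0: "w0 \<noteq> 0"
  obtains r where "r holomorphic_on ball w0 (norm w0)"
    and "\<And>w. w \<in> ball w0 (norm w0) \<Longrightarrow> r w ^ N = w"
proof
  let ?r = "\<lambda>w. principal_root N w0 * principal_root N (w / w0)"
  have "w / w0 \<notin> \<real>\<^sub>\<le>\<^sub>0" if "w \<in> ball w0 (norm w0)" for w
  proof -
    have "norm (1 - w / w0) < 1"
      using that w0 by (simp add: dist_norm norm_divide divide_simps)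
    then have "Re (w / w0) > 0"
      using complex_Re_le_cmod[of "1 - w / w0"] by simp
    then show ?thesis by (simp add: complex_nonpos_Reals_iff)
  qed
  then show "?r holomorphic_on ball w0 (norm w0)"
    unfolding principal_root_def by (intro holomorphic_intros) (use w0 in auto)
  show "?r w ^ N = w" if "w \<in> ball w0 (norm w0)" for w
  proof -
    have "w \<noteq> 0" using that by auto
    then show ?thesis
      using w0 by (simp add: power_mult_distrib principal_root_power[OF N])
  qed
qed

lemma mu_invariant_eq_if_power_eq:
  assumes inv: "\<And>\<zeta> z. \<zeta> \<in> mu N \<Longrightarrow> z \<noteq> 0 \<Longrightarrow> h (\<zeta> * z) = h z"
    and "v \<noteq> 0" "u ^ N = v ^ N"
  shows "h u = h v"
proof -
  have "u / v \<in> mu N" using assms by (simp add: mu_def power_divide)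
  from inv[OF this \<open>v \<noteq> 0\<close>] show ?thesis using \<open>v \<noteq> 0\<close> by simp
qed

lemma mu_invariant_holomorphic_factors_through_power:
  assumes N: "N \<ge> 1" and hol: "h holomorphic_on - {0}"
    and inv: "\<And>\<zeta> z. \<zeta> \<in> mu N \<Longrightarrow> z \<noteq> 0 \<Longrightarrow> h (\<zeta> * z) = h z"
  obtains g where "g holomorphic_on - {0}" "\<And>z. z \<noteq> 0 \<Longrightarrow> h z = g (z ^ N)"
proof
  let ?g = "\<lambda>w. h (principal_root N w)"
  have h_eq: "h u = h v" if "v \<noteq> 0" "u ^ N = v ^ N" for u v
    using mu_invariant_eq_if_power_eq[where h = h, OF inv that] .
  show "h z = ?g (z ^ N)" if "z \<noteq> 0" for z
    using h_eq[OF principal_root_nonzero] principal_root_power[OF N] that by simp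
  \<comment> \<open>principal_root jumps across the negative axis, but by invariance ?g agrees near w0
    with h composed with a holomorphic local root.\<close>
  have "?g analytic_on {w0}" if w0: "w0 \<noteq> 0" for w0
  proof -
    obtain r where r: "r holomorphic_on ball w0 (norm w0)"
      and r_power: "\<And>w. w \<in> ball w0 (norm w0) \<Longrightarrow> r w ^ N = w"
      using local_holomorphic_root[OF N w0] by blast
    have r_nonzero: "r w \<noteq> 0" if "w \<in> ball w0 (norm w0)" for w
      using r_power[OF that] that N by (auto simp: power_0_left)
    have "(h \<circ> r) holomorphic_on ball w0 (norm w0)"
      by (rule holomorphic_on_compose_gen[OF r hol]) (use r_nonzero in auto)
    moreover have "(h \<circ> r) w = ?g w" if "w \<in> ball w0 (norm w0)" for w
    proof -
      have "w \<noteq> 0" using that by auto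
      then have "principal_root N w ^ N = r w ^ N"
        using r_power[OF that] principal_root_power[OF N] by simp
      then have "h (principal_root N w) = h (r w)"
        by (rule h_eq[OF r_nonzero[OF that]])
      then show ?thesis by simp
    qed
    ultimately have "?g holomorphic_on ball w0 (norm w0)"
      by (rule holomorphic_transform)
    with w0 show ?thesis
      unfolding analytic_at_ball by (intro exI[of _ "norm w0"]) simp
  qed
  then have "?g analytic_on - {0}"
    using analytic_on_analytic_at by blast
  then show "?g holomorphic_on - {0}"
    by (rule analytic_imp_holomorphic)
qed


lemma holomorphic_on_power_form:
  assumes "g holomorphic_on - {0}"
  shows "(\<lambda>z. z powi m * g (z ^ N)) holomorphic_on - {0}"
proof -
  have "(g \<circ> (\<lambda>z. z ^ N)) holomorphic_on - {0}"
    by (rule holomorphic_on_compose_gen[OF _ assms]) (auto intro: holomorphic_intros)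
  then have "(\<lambda>z. g (z ^ N)) holomorphic_on - {0}"
    by (simp add: o_def)
  moreover have "(\<lambda>z. z powi m) holomorphic_on - {0}"
    by (intro holomorphic_intros) auto
  ultimately show ?thesis
    by (intro holomorphic_on_mult)
qed

lemma strict_endo_mu_imp_power_form:
  assumes N: "N \<ge> 1" and endo: "strict_endo (mu N) \<psi> \<sigma>"
  shows "\<exists>m::int. \<exists>g. g holomorphic_on (- {0}) \<and> (\<forall>w. w \<noteq> 0 \<longrightarrow> g w \<noteq> 0) \<and>
           (\<forall>\<zeta>\<in>mu N. \<sigma> \<zeta> = \<zeta> powi m) \<and> (\<forall>z. z \<noteq> 0 \<longrightarrow> \<psi> z = z powi m * g (z ^ N))"
proof -
  have hol: "\<psi> holomorphic_on - {0}" and nonzero: "\<And>z. z \<noteq> 0 \<Longrightarrow> \<psi> z \<noteq> 0"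
    and equivariant: "\<And>\<gamma> z. \<gamma> \<in> mu N \<Longrightarrow> z \<noteq> 0 \<Longrightarrow> \<psi> (\<gamma> * z) = \<sigma> \<gamma> * \<psi> z"
    using endo unfolding strict_endo_def by auto
  obtain m :: nat where m: "\<forall>\<zeta>\<in>mu N. \<sigma> \<zeta> = \<zeta> ^ m"
    using mu_endomorphism_is_power[OF N] endo unfolding strict_endo_def by blast
  define h where "h z = \<psi> z / z ^ m" for z
  have h_hol: "h holomorphic_on - {0}"
    unfolding h_def by (intro holomorphic_intros hol) auto
  have h_inv: "h (\<zeta> * z) = h z" if "\<zeta> \<in> mu N" "z \<noteq> 0" for \<zeta> z
    using equivariant[OF that] m that mu_nonzero[OF N that(1)]
    unfolding h_def by (simp add: power_mult_distrib)
  obtain g where g: "g holomorphic_on - {0}" and h_g: "\<And>z. z \<noteq> 0 \<Longrightarrow> h z = g (z ^ N)"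
    using mu_invariant_holomorphic_factors_through_power[where h = h, OF N h_hol h_inv] by blast
  have \<psi>_g: "\<psi> z = z ^ m * g (z ^ N)" if "z \<noteq> 0" for z
    using h_g[OF that] that unfolding h_def by (simp add: field_simps)
  have "g w \<noteq> 0" if "w \<noteq> 0" for w
    using \<psi>_g[OF principal_root_nonzero[of N w]] nonzero[OF principal_root_nonzero[of N w]]
      principal_root_power[OF N that] by auto
  then show ?thesis
    using g m \<psi>_g by (intro exI[of _ "int m"] exI[of _ g]) auto
qed

lemma power_form_imp_strict_endo:
  assumes N: "N \<ge> 1"
    and g: "g holomorphic_on - {0}" "\<forall>w. w \<noteq> 0 \<longrightarrow> g w \<noteq> 0"
    and \<sigma>: "\<forall>\<zeta>\<in>mu N. \<sigma> \<zeta> = \<zeta> powi m"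
    and \<psi>: "\<forall>z. z \<noteq> 0 \<longrightarrow> \<psi> z = z powi m * g (z ^ N)"
  shows "strict_endo (mu N) \<psi> \<sigma>"
  unfolding strict_endo_def
proof (intro conjI ballI allI impI)
  show "\<psi> holomorphic_on - {0}"
    by (rule holomorphic_transform[OF holomorphic_on_power_form[OF g(1)]]) (use \<psi> in auto)
  show "\<psi> z \<noteq> 0" if "z \<noteq> 0" for z
    using \<psi> g(2) that by simp
  show "\<sigma> \<zeta> \<in> mu N" if "\<zeta> \<in> mu N" for \<zeta>
    using \<sigma> mu_power_int that by simp
  show "\<sigma> (a * b) = \<sigma> a * \<sigma> b" if "a \<in> mu N" "b \<in> mu N" for a b
    using \<sigma> mu_mult[OF that] that by (simp add: power_int_mult_distrib)
  show "\<psi> (\<gamma> * z) = \<sigma> \<gamma> * \<psi> z" if "\<gamma> \<in> mu N" "z \<noteq> 0" for \<gamma> z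
  proof -
    have "(\<gamma> * z) ^ N = z ^ N"
      using that(1) by (simp add: mu_def power_mult_distrib)
    then show ?thesis
      using \<psi> \<sigma> that mu_nonzero[OF N that(1)] by (simp add: power_int_mult_distrib)
  qed
qed

lemma two_iso_power_form_iff:
  assumes N: "N \<ge> 1"
  shows "two_iso (mu N) (\<lambda>z. z powi m * g (z ^ N)) (\<lambda>z. z powi m * g' (z ^ N)) \<longleftrightarrow>
         (\<exists>a\<in>mu N. \<forall>w. w \<noteq> 0 \<longrightarrow> g' w = a * g w)"
proof
  assume "two_iso (mu N) (\<lambda>z. z powi m * g (z ^ N)) (\<lambda>z. z powi m * g' (z ^ N))"
  then obtain a where a: "a \<in> mu N"
    and "\<forall>z. z \<noteq> 0 \<longrightarrow> z powi m * g' (z ^ N) = a * (z powi m * g (z ^ N))"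
    unfolding two_iso_def by blast
  then have on_powers: "g' (z ^ N) = a * g (z ^ N)" if "z \<noteq> 0" for z
    using that by simp
  have "g' w = a * g w" if "w \<noteq> 0" for w
    using on_powers[OF principal_root_nonzero[of N w]] principal_root_power[OF N that] by simp
  with a show "\<exists>a\<in>mu N. \<forall>w. w \<noteq> 0 \<longrightarrow> g' w = a * g w" by blast
next
  assume "\<exists>a\<in>mu N. \<forall>w. w \<noteq> 0 \<longrightarrow> g' w = a * g w"
  then show "two_iso (mu N) (\<lambda>z. z powi m * g (z ^ N)) (\<lambda>z. z powi m * g' (z ^ N))"
    unfolding two_iso_def by auto
qed

theorem mainTheorem9:
  fixes N :: nat
  assumes "N \<ge> 1"
  shows "(\<forall>\<psi> \<sigma>. strict_endo (mu N) \<psi> \<sigma> \<longleftrightarrow>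
            (\<exists>m::int. \<exists>g. g holomorphic_on (- {0}) \<and> (\<forall>w. w \<noteq> 0 \<longrightarrow> g w \<noteq> 0) \<and>
               (\<forall>\<zeta>\<in>mu N. \<sigma> \<zeta> = \<zeta> powi m) \<and>
               (\<forall>z. z \<noteq> 0 \<longrightarrow> \<psi> z = z powi m * g (z ^ N))))
       \<and> (\<forall>(m::int) g g'.
            g holomorphic_on (- {0}) \<and> (\<forall>w. w \<noteq> 0 \<longrightarrow> g w \<noteq> 0) \<and>
            g' holomorphic_on (- {0}) \<and> (\<forall>w. w \<noteq> 0 \<longrightarrow> g' w \<noteq> 0) \<longrightarrow>
            (two_iso (mu N) (\<lambda>z. z powi m * g (z ^ N)) (\<lambda>z. z powi m * g' (z ^ N))
             \<longleftrightarrow> (\<exists>a\<in>mu N. \<forall>w. w \<noteq> 0 \<longrightarrow> g' w = a * g w)))"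
proof (intro conjI allI)
  fix \<psi> \<sigma>
  show "strict_endo (mu N) \<psi> \<sigma> \<longleftrightarrow>
          (\<exists>m::int. \<exists>g. g holomorphic_on (- {0}) \<and> (\<forall>w. w \<noteq> 0 \<longrightarrow> g w \<noteq> 0) \<and>
             (\<forall>\<zeta>\<in>mu N. \<sigma> \<zeta> = \<zeta> powi m) \<and> (\<forall>z. z \<noteq> 0 \<longrightarrow> \<psi> z = z powi m * g (z ^ N)))"
    using strict_endo_mu_imp_power_form[OF assms] power_form_imp_strict_endo[OF assms] by blast
qed (use two_iso_power_form_iff[OF assms] in blast)

end
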